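(* Let $X$ be any Tychonoff space and let $E$ be a Banach space. Then every sequentially continuous linear operator $T:C_p(X)\to E_w$ has a finite-dimensional range.
   Context: For a Tychonoff space $X$, $C_p(X)$ denotes the space of all continuous real-valued functions on $X$ with the topology of pointwise convergence. For a Banach space $E$, $E_w$ denotes $E$ endowed with its weak topology $\sigma(E,E')$. A map between topological spaces is sequentially continuous if it sends convergent sequences to convergent sequences (with the corresponding limits). *)

theory Defs
  imports "HOL-Analysis.Analysis"
begin

definition tychonoff_space :: "'a topology \<Rightarrow> bool" where
  "tychonoff_space X \<longleftrightarrow> completely_regular_space X \<and> Hausdorff_space X"

text \<open>C(X): continuous real functions on X, represented extensionally (value 0 off topspace X).\<close>
definition Cfun :: "'a topology \<Rightarrow> ('a \<Rightarrow> real) set" where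
  "Cfun X = {f. continuous_map X euclideanreal f \<and> (\<forall>x. x \<notin> topspace X \<longrightarrow> f x = 0)}"

definition Cp_converges :: "'a topology \<Rightarrow> (nat \<Rightarrow> 'a \<Rightarrow> real) \<Rightarrow> ('a \<Rightarrow> real) \<Rightarrow> bool" where
  "Cp_converges X fs f \<longleftrightarrow> (\<forall>x\<in>topspace X. (\<lambda>n. fs n x) \<longlonglongrightarrow> f x)"

definition weak_converges :: "(nat \<Rightarrow> 'b::real_normed_vector) \<Rightarrow> 'b \<Rightarrow> bool" where
  "weak_converges ys y \<longleftrightarrow>
     (\<forall>\<phi>::'b \<Rightarrow> real. bounded_linear \<phi> \<longrightarrow> (\<lambda>n. \<phi> (ys n)) \<longlonglongrightarrow> \<phi> y)"

definition linear_on_Cp :: "'a topology \<Rightarrow> (('a \<Rightarrow> real) \<Rightarrow> 'b::real_vector) \<Rightarrow> bool" where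
  "linear_on_Cp X T \<longleftrightarrow>
     (\<forall>f\<in>Cfun X. \<forall>g\<in>Cfun X. \<forall>a b::real. T (\<lambda>x. a * f x + b * g x) = a *\<^sub>R T f + b *\<^sub>R T g)"

definition seq_continuous_Cp_weak :: "'a topology \<Rightarrow> (('a \<Rightarrow> real) \<Rightarrow> 'b::real_normed_vector) \<Rightarrow> bool" where
  "seq_continuous_Cp_weak X T \<longleftrightarrow>
     (\<forall>fs f. (\<forall>n. fs n \<in> Cfun X) \<and> f \<in> Cfun X \<and> Cp_converges X fs f
        \<longrightarrow> weak_converges (\<lambda>n. T (fs n)) (T f))"

end

theory Submission
  imports Defs
begin

text \<open>Call \<open>W \<subseteq> X\<close> \<open>T\<close>-null if \<open>T\<close> vanishes on every continuous function vanishing off \<open>W\<close>.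
  Rescaling test sequences and applying Baire's theorem in the dual of \<open>E\<close> shows that sets
  \<open>W\<^sub>n\<close> which eventually leave every point are eventually \<open>T\<close>-null; so there is no disjoint
  sequence of sets that are not \<open>T\<close>-null.

  Now let \<open>T\<close> have infinite rank on a cozero set \<open>W = {u > 0}\<close>. If for every \<open>k\<close> vanishing off
  \<open>W\<close> and every \<open>t\<close> one of \<open>{k > t u}\<close>, \<open>{k < t u}\<close> were \<open>T\<close>-null, a cut argument would give
  \<open>T k = c T u\<close>. So some \<open>k - t u\<close> has non-null sets on both sides, and cutting along it yields a
  smaller cozero set of infinite rank together with a disjoint set that is not \<open>T\<close>-null.
  Iterating from \<open>W = X\<close> gives a disjoint sequence of non-null sets, a contradiction.\<close>

section \<open>Norming functionals\<close>

text \<open>The graph of a linear functional of norm at most one on a subspace.\<close>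
definition dominated_linear_graph :: "('b::real_normed_vector \<times> real) set \<Rightarrow> bool" where
  "dominated_linear_graph G \<longleftrightarrow> (0, 0) \<in> G
     \<and> (\<forall>x a y b. (x, a) \<in> G \<longrightarrow> (y, b) \<in> G \<longrightarrow> (x + y, a + b) \<in> G)
     \<and> (\<forall>x a c. (x, a) \<in> G \<longrightarrow> (c *\<^sub>R x, c * a) \<in> G)
     \<and> (\<forall>x a. (x, a) \<in> G \<longrightarrow> a \<le> norm x)"

lemma dominated_linear_graphD:
  assumes "dominated_linear_graph G"
  shows dominated_linear_graph_zero: "(0, 0) \<in> G"
    and dominated_linear_graph_add: "(x, a) \<in> G \<Longrightarrow> (y, b) \<in> G \<Longrightarrow> (x + y, a + b) \<in> G"
    and dominated_linear_graph_scaleR: "(x, a) \<in> G \<Longrightarrow> (c *\<^sub>R x, c * a) \<in> G"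
    and dominated_linear_graph_le_norm: "(x, a) \<in> G \<Longrightarrow> a \<le> norm x"
  using assms unfolding dominated_linear_graph_def by blast+

lemma dominated_linear_graph_unique:
  assumes G: "dominated_linear_graph G" and "(x, a) \<in> G" "(x, b) \<in> G"
  shows "a = b"
proof -
  have "(x + (-1) *\<^sub>R x, a + (-1) * b) \<in> G" "(x + (-1) *\<^sub>R x, b + (-1) * a) \<in> G"
    using assms by (blast intro: dominated_linear_graph_add dominated_linear_graph_scaleR)+
  then have "a - b \<le> 0" "b - a \<le> 0"
    using dominated_linear_graph_le_norm[OF G] by force+
  then show ?thesis by simp
qed

text \<open>The one-dimensional step of Hahn--Banach: the value \<open>c\<close> at the new vector \<open>z\<close> must
  lie between the supremum of \<open>a - \<parallel>m - z\<parallel>\<close> and the infimum of \<open>\<parallel>m + z\<parallel> - a\<close>.\<close>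
lemma dominated_linear_graph_extension_value:
  assumes M: "dominated_linear_graph M"
  obtains c where "\<And>m a t. (m, a) \<in> M \<Longrightarrow> a + t * c \<le> norm (m + t *\<^sub>R z)"
proof -
  define S where "S = {a - norm (m - z) | m a. (m, a) \<in> M}"
  have sep: "a - norm (m - z) \<le> norm (m' + z) - a'" if "(m, a) \<in> M" "(m', a') \<in> M" for m a m' a'
  proof -
    have "a + a' \<le> norm (m + m')"
      using that by (intro dominated_linear_graph_le_norm[OF M] dominated_linear_graph_add[OF M])
    also have "\<dots> \<le> norm (m - z) + norm (m' + z)"
      using norm_triangle_ineq[of "m - z" "m' + z"] by simp
    finally show ?thesis by simp
  qed
  have "S \<noteq> {}" "bdd_above S"
    using sep[OF _ dominated_linear_graph_zero[OF M]] dominated_linear_graph_zero[OF M]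
    unfolding S_def bdd_above_def by fastforce+
  then have lower: "a - norm (m - z) \<le> Sup S" and upper: "Sup S \<le> norm (m + z) - a"
    if "(m, a) \<in> M" for m a
    using that sep by (auto simp: S_def intro!: cSup_upper cSup_least)
  have "a + t * Sup S \<le> norm (m + t *\<^sub>R z)" if ma: "(m, a) \<in> M" for m a t
  proof (cases t "0 :: real" rule: linorder_cases)
    case less
    have "(- 1 / t) * a - norm ((- 1 / t) *\<^sub>R m - z) \<le> Sup S"
      using lower[OF dominated_linear_graph_scaleR[OF M ma]] .
    then have "a + t * Sup S \<le> (- t) * norm ((- 1 / t) *\<^sub>R m - z)"
      using less by (simp add: field_simps)
    also have "\<dots> = norm ((- t) *\<^sub>R ((- 1 / t) *\<^sub>R m - z))"
      using less by simp
    also have "(- t) *\<^sub>R ((- 1 / t) *\<^sub>R m - z) = m + t *\<^sub>R z"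
      using less by (simp add: algebra_simps)
    finally show ?thesis .
  next
    case equal
    then show ?thesis using dominated_linear_graph_le_norm[OF M ma] by simp
  next
    case greater
    have "Sup S \<le> norm ((1 / t) *\<^sub>R m + z) - (1 / t) * a"
      using upper[OF dominated_linear_graph_scaleR[OF M ma]] .
    then have "a + t * Sup S \<le> t * norm ((1 / t) *\<^sub>R m + z)"
      using greater by (simp add: field_simps)
    also have "\<dots> = norm (t *\<^sub>R ((1 / t) *\<^sub>R m + z))"
      using greater by simp
    also have "t *\<^sub>R ((1 / t) *\<^sub>R m + z) = m + t *\<^sub>R z"
      using greater by (simp add: algebra_simps)
    finally show ?thesis .
  qed
  then show thesis by (rule that)
qed

lemma dominated_linear_graph_extend:
  assumes M: "dominated_linear_graph M" and z: "z \<notin> fst ` M"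
  shows "\<exists>G. dominated_linear_graph G \<and> M \<subset> G"
proof -
  obtain c where c: "\<And>m a t. (m, a) \<in> M \<Longrightarrow> a + t * c \<le> norm (m + t *\<^sub>R z)"
    using dominated_linear_graph_extension_value[OF M] by blast
  define G where "G = {(m + t *\<^sub>R z, a + t * c) | m a t. (m, a) \<in> M}"
  have G_I: "(m + t *\<^sub>R z, a + t * c) \<in> G" if "(m, a) \<in> M" for m a t
    unfolding G_def using that by blast
  have G_E: "\<exists>m a' t. (m, a') \<in> M \<and> x = m + t *\<^sub>R z \<and> a = a' + t * c" if "(x, a) \<in> G" for x a
    using that unfolding G_def by blast
  have "dominated_linear_graph G"
    unfolding dominated_linear_graph_def
  proof (intro conjI allI impI)
    show "(0, 0) \<in> G"
      using G_I[OF dominated_linear_graph_zero[OF M], of 0] by simp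
  next
    fix x a y b
    assume "(x, a) \<in> G" "(y, b) \<in> G"
    then obtain m a' s n b' t where "(m, a') \<in> M" "(n, b') \<in> M"
      and "x = m + s *\<^sub>R z" "a = a' + s * c" "y = n + t *\<^sub>R z" "b = b' + t * c"
      using G_E by meson
    then show "(x + y, a + b) \<in> G"
      using G_I[OF dominated_linear_graph_add[OF M], of m a' n b' "s + t"]
      by (simp add: algebra_simps)
  next
    fix x a r
    assume "(x, a) \<in> G"
    then obtain m a' t where "(m, a') \<in> M" "x = m + t *\<^sub>R z" "a = a' + t * c"
      using G_E by meson
    then show "(r *\<^sub>R x, r * a) \<in> G"
      using G_I[OF dominated_linear_graph_scaleR[OF M], of m a' r "r * t"]
      by (simp add: algebra_simps)
  next
    fix x a
    assume "(x, a) \<in> G"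
    then show "a \<le> norm x"
      using G_E c by blast
  qed
  moreover have "M \<subseteq> G"
    using G_I[of _ _ 0] by force
  moreover have "(z, c) \<in> G - M"
    using G_I[OF dominated_linear_graph_zero[OF M], of 1] z by force
  ultimately show ?thesis by blast
qed

lemma dominated_linear_graph_Union_chain:
  assumes "C \<noteq> {}" and C: "\<And>G. G \<in> C \<Longrightarrow> dominated_linear_graph G"
    and chain: "\<And>G H. G \<in> C \<Longrightarrow> H \<in> C \<Longrightarrow> G \<subseteq> H \<or> H \<subseteq> G"
  shows "dominated_linear_graph (\<Union>C)"
  unfolding dominated_linear_graph_def
proof (intro conjI allI impI)
  show "(0, 0) \<in> \<Union>C"
    using assms(1) C dominated_linear_graph_zero by blast
next
  fix x a y b
  assume "(x, a) \<in> \<Union>C" "(y, b) \<in> \<Union>C"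
  then obtain G H where "G \<in> C" "H \<in> C" "(x, a) \<in> G" "(y, b) \<in> H"
    by blast
  then show "(x + y, a + b) \<in> \<Union>C"
    using chain[of G H] C dominated_linear_graph_add by blast
next
  fix x a r
  assume "(x, a) \<in> \<Union>C"
  then show "(r *\<^sub>R x, r * a) \<in> \<Union>C"
    using C dominated_linear_graph_scaleR by blast
next
  fix x a
  assume "(x, a) \<in> \<Union>C"
  then show "a \<le> norm x"
    using C dominated_linear_graph_le_norm by blast
qed

lemma bounded_linear_of_dominated_linear_graph:
  assumes G: "dominated_linear_graph G" and total: "fst ` G = UNIV"
  obtains \<phi> :: "'b::real_normed_vector \<Rightarrow> real"
  where "bounded_linear \<phi>" "\<And>x a. (x, a) \<in> G \<Longrightarrow> \<phi> x = a"
proof -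
  define \<phi> where "\<phi> x = (THE a. (x, a) \<in> G)" for x
  have graph: "(x, \<phi> x) \<in> G" for x
  proof -
    obtain a where a: "(x, a) \<in> G"
      using total by (metis UNIV_I fst_conv imageE prod.collapse)
    then have "\<phi> x = a"
      unfolding \<phi>_def using dominated_linear_graph_unique[OF G] by blast
    with a show ?thesis by simp
  qed
  have eq: "\<phi> x = a" if "(x, a) \<in> G" for x a
    using dominated_linear_graph_unique[OF G graph that] .
  have "norm (\<phi> x) \<le> norm x * 1" for x
    using dominated_linear_graph_le_norm[OF G graph, of x]
      dominated_linear_graph_le_norm[OF G dominated_linear_graph_scaleR[OF G graph, of "-1" x]]
    by simp
  then have "bounded_linear \<phi>"
    by (intro bounded_linear_intro[of _ 1] eq dominated_linear_graph_add[OF G graph graph])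
      (use dominated_linear_graph_scaleR[OF G graph] in auto)
  then show thesis
    using eq that by blast
qed

lemma dominated_linear_graph_total_extension:
  assumes "dominated_linear_graph G0"
  obtains M where "dominated_linear_graph M" "G0 \<subseteq> M" "fst ` M = UNIV"
proof -
  define \<G> where "\<G> = {G. dominated_linear_graph G \<and> G0 \<subseteq> G}"
  have "\<exists>M\<in>\<G>. \<forall>G\<in>\<G>. M \<subseteq> G \<longrightarrow> G = M"
  proof (rule subset_Zorn_nonempty)
    show "\<G> \<noteq> {}"
      using assms unfolding \<G>_def by blast
  next
    fix C assume "C \<noteq> {}" "subset.chain \<G> C"
    then have "C \<subseteq> \<G>" "\<And>G H. G \<in> C \<Longrightarrow> H \<in> C \<Longrightarrow> G \<subseteq> H \<or> H \<subseteq> G"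
      unfolding subset.chain_def by blast+
    then show "\<Union>C \<in> \<G>"
      using \<open>C \<noteq> {}\<close> dominated_linear_graph_Union_chain[of C] unfolding \<G>_def by blast
  qed
  then obtain M where M: "dominated_linear_graph M" "G0 \<subseteq> M"
    and maximal: "\<forall>G\<in>\<G>. M \<subseteq> G \<longrightarrow> G = M"
    unfolding \<G>_def by auto
  have "fst ` M = UNIV"
  proof (rule ccontr)
    assume "fst ` M \<noteq> UNIV"
    then obtain z where "z \<notin> fst ` M"
      by blast
    then obtain G where "dominated_linear_graph G" "M \<subset> G"
      using dominated_linear_graph_extend[OF M(1)] by blast
    moreover have "G \<in> \<G>"
      using calculation M(2) unfolding \<G>_def by auto
    ultimately show False
      using maximal by blast
  qed
  with M show thesis
    by (rule that)
qed

lemma dominated_linear_graph_ray: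
  fixes y :: "'b::real_normed_vector"
  shows "dominated_linear_graph (range (\<lambda>t. (t *\<^sub>R y, t * norm y)))"
    (is "dominated_linear_graph (range ?ray)")
  unfolding dominated_linear_graph_def
proof (intro conjI allI impI)
  show "(0, 0) \<in> range ?ray"
    using rangeI[of ?ray 0] by simp
next
  fix x a x' b
  assume "(x, a) \<in> range ?ray" "(x', b) \<in> range ?ray"
  then obtain s t where "(x, a) = ?ray s" "(x', b) = ?ray t"
    by blast
  then show "(x + x', a + b) \<in> range ?ray"
    using rangeI[of ?ray "s + t"] by (simp add: algebra_simps)
next
  fix x a r
  assume "(x, a) \<in> range ?ray"
  then obtain s where "(x, a) = ?ray s"
    by blast
  then show "(r *\<^sub>R x, r * a) \<in> range ?ray"
    using rangeI[of ?ray "r * s"] by (simp add: mult.assoc)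
next
  fix x a
  assume "(x, a) \<in> range ?ray"
  then obtain s where "x = s *\<^sub>R y" "a = s * norm y"
    by auto
  then show "a \<le> norm x"
    by (simp add: mult_right_mono)
qed

lemma exists_norming_functional:
  fixes y :: "'b::real_normed_vector"
  obtains \<phi> :: "'b \<Rightarrow> real" where "bounded_linear \<phi>" "\<phi> y = norm y"
proof -
  obtain M where M: "dominated_linear_graph M" "range (\<lambda>t. (t *\<^sub>R y, t * norm y)) \<subseteq> M"
    and "fst ` M = UNIV"
    using dominated_linear_graph_total_extension[OF dominated_linear_graph_ray] by blast
  then obtain \<phi> where "bounded_linear \<phi>" "\<And>x a. (x, a) \<in> M \<Longrightarrow> \<phi> x = a"
    using bounded_linear_of_dominated_linear_graph by blast
  moreover have "(y, norm y) \<in> M"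
    using M(2) rangeI[of "\<lambda>t. (t *\<^sub>R y, t * norm y)" 1] by auto
  ultimately show thesis
    using that by blast
qed

lemma zero_if_functionals_vanish:
  fixes y :: "'b::real_normed_vector"
  assumes "\<And>\<phi> :: 'b \<Rightarrow> real. bounded_linear \<phi> \<Longrightarrow> \<phi> y = 0"
  shows "y = 0"
proof -
  obtain \<phi> :: "'b \<Rightarrow> real" where "bounded_linear \<phi>" "\<phi> y = norm y"
    by (rule exists_norming_functional)
  then show ?thesis
    using assms[of \<phi>] by simp
qed

lemma weak_converges_const_imp_eq:
  assumes "weak_converges (\<lambda>n. y) z"
  shows "z = y"
proof -
  have "\<phi> (z - y) = 0" if "bounded_linear \<phi>" for \<phi> :: "'a \<Rightarrow> real"
  proof -
    have "(\<lambda>n. \<phi> y) \<longlonglongrightarrow> \<phi> z"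
      using assms that unfolding weak_converges_def by blast
    then have "\<phi> z = \<phi> y"
      using LIMSEQ_const_iff by metis
    then show ?thesis
      using linear_diff[OF bounded_linear.linear[OF that]] by simp
  qed
  then show ?thesis
    using zero_if_functionals_vanish[of "z - y"] by simp
qed

lemma subspace_eq_UNIV_if_interior_nonempty:
  fixes S :: "'a::real_normed_vector set"
  assumes S: "subspace S" and "interior S \<noteq> {}"
  shows "S = UNIV"
proof -
  obtain x where "x \<in> interior S"
    using assms(2) by blast
  then obtain e where "e > 0" and ball: "ball x e \<subseteq> S"
    using mem_interior by blast
  have "y \<in> S" if "y \<noteq> 0" for y
  proof -
    define c where "c = e / (2 * norm y)"
    have "c > 0"
      using \<open>e > 0\<close> that by (simp add: c_def)
    then have "norm (c *\<^sub>R y) = e / 2"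
      using that \<open>e > 0\<close> by (simp add: c_def)
    then have "x + c *\<^sub>R y \<in> S" "x \<in> S"
      using ball \<open>e > 0\<close> by (auto simp: dist_norm)
    then have "(x + c *\<^sub>R y) - x \<in> S"
      by (rule subspace_diff[OF S])
    then have "c *\<^sub>R y \<in> S"
      by simp
    then have "(1 / c) *\<^sub>R (c *\<^sub>R y) \<in> S"
      by (rule subspace_scale[OF S])
    then show ?thesis
      using \<open>c > 0\<close> by simp
  qed
  then show ?thesis
    using subspace_0[OF S] by (metis UNIV_eq_I)
qed

section \<open>Baire category in the dual space\<close>

lemma closed_blinfun_annihilator:
  "closed {\<phi> :: 'a::real_normed_vector \<Rightarrow>\<^sub>L 'b::real_normed_vector. \<forall>y\<in>Y. \<phi> y = 0}"
proof -
  have "{\<phi> :: 'a \<Rightarrow>\<^sub>L 'b. \<forall>y\<in>Y. \<phi> y = 0} = (\<Inter>y\<in>Y. {\<phi> :: 'a \<Rightarrow>\<^sub>L 'b. \<phi> y = 0})"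
    by auto
  then show ?thesis
    by (auto intro!: closed_INT closed_Collect_eq continuous_intros)
qed

lemma subspace_blinfun_annihilator:
  "subspace {\<phi> :: 'a::real_normed_vector \<Rightarrow>\<^sub>L 'b::real_normed_vector. \<forall>y\<in>Y. \<phi> y = 0}"
  unfolding subspace_def by (simp add: blinfun.add_left blinfun.scaleR_left)

text \<open>The functionals vanishing on the tail from \<open>N\<close> on form closed subspaces covering the dual
  space; by Baire's theorem one of them has interior points, so it is the whole dual space.\<close>
lemma eventually_zero_if_functionals_eventually_zero:
  fixes y :: "nat \<Rightarrow> 'b::banach"
  assumes "\<And>\<phi> :: 'b \<Rightarrow> real. bounded_linear \<phi> \<Longrightarrow> eventually (\<lambda>n. \<phi> (y n) = 0) sequentially"
  shows "eventually (\<lambda>n. y n = 0) sequentially"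
proof -
  define A where "A N = {\<phi> :: 'b \<Rightarrow>\<^sub>L real. \<forall>z\<in>y ` {N..}. \<phi> z = 0}" for N
  have closed: "closed (A N)" and subspace: "subspace (A N)" for N
    unfolding A_def by (rule closed_blinfun_annihilator subspace_blinfun_annihilator)+
  have "\<phi> \<in> \<Union>(range A)" for \<phi>
  proof -
    obtain N where "\<forall>n\<ge>N. \<phi> (y n) = 0"
      using assms[OF blinfun.bounded_linear_right] unfolding eventually_sequentially by blast
    then show ?thesis
      unfolding A_def by auto
  qed
  then have covering: "UNIV = \<Union>(range A)"
    by (rule UNIV_eq_I)
  have "\<exists>N. interior (A N) \<noteq> {}"
  proof (rule ccontr)
    assume "\<nexists>N. interior (A N) \<noteq> {}"
    then have "Met_TC.mtopology interior_of \<Union>(range A) = {}"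
      using closed by (intro Met_TC.metric_Baire_category_alt) (auto simp: complete_UNIV)
    then show False
      by (simp flip: covering)
  qed
  then obtain N where "interior (A N) \<noteq> {}"
    by blast
  then have "A N = UNIV"
    by (rule subspace_eq_UNIV_if_interior_nonempty[OF subspace])
  have "y n = 0" if "n \<ge> N" for n
  proof (rule zero_if_functionals_vanish)
    fix \<phi> :: "'b \<Rightarrow> real"
    assume "bounded_linear \<phi>"
    moreover have "Blinfun \<phi> \<in> A N"
      using \<open>A N = UNIV\<close> by simp
    ultimately show "\<phi> (y n) = 0"
      using that unfolding A_def by (simp add: bounded_linear_Blinfun_apply)
  qed
  then show ?thesis
    unfolding eventually_sequentially by blast
qed

section \<open>Continuous functions and cozero sets\<close>

lemma CfunI:
  "continuous_map X euclideanreal f \<Longrightarrow> (\<And>x. x \<notin> topspace X \<Longrightarrow> f x = 0) \<Longrightarrow> f \<in> Cfun X"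
  unfolding Cfun_def by blast

lemma Cfun_continuous_map: "f \<in> Cfun X \<Longrightarrow> continuous_map X euclideanreal f"
  and Cfun_outside: "f \<in> Cfun X \<Longrightarrow> x \<notin> topspace X \<Longrightarrow> f x = 0"
  unfolding Cfun_def by blast+

lemma Cfun_zero: "(\<lambda>x. 0) \<in> Cfun X"
  by (rule CfunI) auto

lemma Cfun_add: "f \<in> Cfun X \<Longrightarrow> g \<in> Cfun X \<Longrightarrow> (\<lambda>x. f x + g x) \<in> Cfun X"
  and Cfun_diff: "f \<in> Cfun X \<Longrightarrow> g \<in> Cfun X \<Longrightarrow> (\<lambda>x. f x - g x) \<in> Cfun X"
  and Cfun_cmult: "f \<in> Cfun X \<Longrightarrow> (\<lambda>x. c * f x) \<in> Cfun X"
  and Cfun_pos_part: "f \<in> Cfun X \<Longrightarrow> (\<lambda>x. max (f x) 0) \<in> Cfun X"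
  by (auto intro!: CfunI continuous_intros simp: Cfun_continuous_map Cfun_outside)

lemma Cfun_mult_continuous:
  "f \<in> Cfun X \<Longrightarrow> continuous_map X euclideanreal g \<Longrightarrow> (\<lambda>x. f x * g x) \<in> Cfun X"
  by (auto intro!: CfunI continuous_intros simp: Cfun_continuous_map Cfun_outside)

lemma continuous_map_ramp:
  fixes a :: "'a \<Rightarrow> real"
  assumes "continuous_map X euclideanreal a" "r < s"
  obtains p where "continuous_map X euclideanreal p"
    "\<And>x. p x \<noteq> 0 \<Longrightarrow> r < a x" "\<And>x. p x \<noteq> 1 \<Longrightarrow> a x < s"
proof
  define p where "p x = min 1 (max 0 ((a x - r) / (s - r)))" for x
  show "continuous_map X euclideanreal p"
    unfolding p_def using assms by (intro continuous_intros) auto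
  show "r < a x" if "p x \<noteq> 0" for x
    using that assms(2)
    by (auto simp: p_def min_def max_def zero_le_divide_iff divide_le_0_iff split: if_splits)
  show "a x < s" if "p x \<noteq> 1" for x
    using that assms(2) by (auto simp: p_def min_def max_def le_divide_eq split: if_splits)
qed

lemma abs_clamp_le:
  fixes y e :: real
  shows "0 \<le> e \<Longrightarrow> \<bar>y - max (y - e) 0 + max (- y - e) 0\<bar> \<le> e"
  by (auto simp: max_def)

lemma real_cut_up_down_closed:
  fixes U D :: "real \<Rightarrow> bool"
  assumes up: "\<And>s t. U s \<Longrightarrow> s \<le> t \<Longrightarrow> U t"
    and down: "\<And>s t. D t \<Longrightarrow> s \<le> t \<Longrightarrow> D s"
    and cover: "\<And>t. U t \<or> D t"
    and "U a" "D b"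
  shows "\<exists>c. (\<forall>e>0. U (c + e)) \<and> (\<forall>e>0. D (c - e))"
proof (intro exI conjI allI impI)
  define S where "S = insert b {t. \<not> U t}"
  have "t \<le> max a b" if "t \<in> S" for t
    using that up[of a t] \<open>U a\<close> unfolding S_def by force
  then have bdd: "bdd_above S"
    by (rule bdd_aboveI)
  show "U (Sup S + e)" if "e > 0" for e :: real
  proof (rule ccontr)
    assume "\<not> U (Sup S + e)"
    then have "Sup S + e \<le> Sup S"
      using bdd by (intro cSup_upper) (simp_all add: S_def)
    with \<open>e > 0\<close> show False
      by simp
  qed
  show "D (Sup S - e)" if "e > 0" for e :: real
  proof (rule ccontr)
    assume not_D: "\<not> D (Sup S - e)"
    have "t \<le> Sup S - e" if "t \<in> S" for t
    proof (rule ccontr)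
      assume "\<not> t \<le> Sup S - e"
      then have "\<not> D t"
        using down[of t "Sup S - e"] not_D by force
      then show False
        using that cover[of t] \<open>D b\<close> unfolding S_def by blast
    qed
    then have "Sup S \<le> Sup S - e"
      by (intro cSup_least) (auto simp: S_def)
    with \<open>e > 0\<close> show False
      by simp
  qed
qed

definition cozero_set :: "'a topology \<Rightarrow> 'a set \<Rightarrow> bool" where
  "cozero_set X W \<longleftrightarrow> (\<exists>u \<in> Cfun X. (\<forall>x. 0 \<le> u x) \<and> W = {x. 0 < u x})"

lemma cozero_set_topspace: "cozero_set X (topspace X)"
proof -
  define u where "u x = (if x \<in> topspace X then 1 else 0 :: real)" for x
  have "continuous_map X euclideanreal u"
    by (rule continuous_map_eq[of X euclideanreal "\<lambda>x. 1"]) (auto simp: u_def)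
  then have "u \<in> Cfun X"
    by (rule CfunI) (simp add: u_def)
  moreover have "topspace X = {x. 0 < u x}"
    by (auto simp: u_def)
  ultimately show ?thesis
    unfolding cozero_set_def by (intro bexI[of _ u]) (auto simp: u_def)
qed

lemma cozero_set_level:
  assumes a: "a \<in> Cfun X" and "0 \<le> r"
  shows "cozero_set X {x. r < a x}"
proof -
  define v where "v x = max (a x - r) 0" for x
  have "v \<in> Cfun X"
    unfolding v_def using Cfun_continuous_map[OF a] Cfun_outside[OF a] \<open>0 \<le> r\<close>
    by (intro CfunI continuous_intros) auto
  then show ?thesis
    unfolding cozero_set_def by (intro bexI[of _ v]) (auto simp: v_def)
qed

lemma cozero_set_Int_below:
  assumes "cozero_set X W" and a: "continuous_map X euclideanreal a"
  shows "cozero_set X (W \<inter> {x. a x < s})"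
proof -
  obtain u where u: "u \<in> Cfun X" "\<And>x. 0 \<le> u x" and W: "W = {x. 0 < u x}"
    using assms(1) unfolding cozero_set_def by blast
  define v where "v x = u x * max (s - a x) 0" for x
  have "v \<in> Cfun X"
    unfolding v_def using u(1) a by (intro Cfun_mult_continuous continuous_intros)
  then show ?thesis
    unfolding cozero_set_def W using u(2)
    by (intro bexI[of _ v]) (auto simp: v_def zero_less_mult_iff)
qed

section \<open>Sequentially continuous operators from \<open>C\<^sub>p(X)\<close> to \<open>E\<^sub>w\<close>\<close>

locale Cp_weak_operator =
  fixes X :: "'a topology" and T :: "('a \<Rightarrow> real) \<Rightarrow> 'b::banach"
  assumes linear: "linear_on_Cp X T"
    and seq_continuous: "seq_continuous_Cp_weak X T"
begin

lemma T_lincomb: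
  "f \<in> Cfun X \<Longrightarrow> g \<in> Cfun X \<Longrightarrow> T (\<lambda>x. a * f x + b * g x) = a *\<^sub>R T f + b *\<^sub>R T g"
  using linear unfolding linear_on_Cp_def by blast

lemma T_zero: "T (\<lambda>x. 0) = 0"
  using T_lincomb[OF Cfun_zero Cfun_zero, of 0 0] by simp

lemma T_add: "f \<in> Cfun X \<Longrightarrow> g \<in> Cfun X \<Longrightarrow> T (\<lambda>x. f x + g x) = T f + T g"
  and T_diff: "f \<in> Cfun X \<Longrightarrow> g \<in> Cfun X \<Longrightarrow> T (\<lambda>x. f x - g x) = T f - T g"
  and T_cmult: "f \<in> Cfun X \<Longrightarrow> T (\<lambda>x. c * f x) = c *\<^sub>R T f"
  using T_lincomb[of f g 1 1] T_lincomb[of f g 1 "-1"] T_lincomb[of f f c 0] by simp_all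

lemma T_weak_tendsto:
  assumes "\<And>n. fs n \<in> Cfun X" "f \<in> Cfun X"
    and "\<And>x. x \<in> topspace X \<Longrightarrow> (\<lambda>n. fs n x) \<longlonglongrightarrow> f x"
  shows "weak_converges (\<lambda>n. T (fs n)) (T f)"
  using seq_continuous assms unfolding seq_continuous_Cp_weak_def Cp_converges_def by blast

text \<open>Rescale each \<open>g n\<close> so that \<open>\<phi> (T (g n)) \<in> {0, 1}\<close>: the rescaled sequence still
  tends to \<open>0\<close> pointwise, so \<open>\<phi> (T (g n))\<close> is eventually \<open>0\<close>; Baire's theorem then
  makes this uniform in \<open>\<phi>\<close>.\<close>
lemma T_eventually_zero:
  assumes g: "\<And>n. g n \<in> Cfun X"
    and eventually_zero: "\<And>x. x \<in> topspace X \<Longrightarrow> eventually (\<lambda>n. g n x = 0) sequentially"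
  shows "eventually (\<lambda>n. T (g n) = 0) sequentially"
proof (rule eventually_zero_if_functionals_eventually_zero)
  fix \<phi> :: "'b \<Rightarrow> real"
  assume \<phi>: "bounded_linear \<phi>"
  define h where "h n x = inverse (\<phi> (T (g n))) * g n x" for n x
  have "(\<lambda>n. h n x) \<longlonglongrightarrow> 0" if "x \<in> topspace X" for x
    by (rule tendsto_eventually)
      (use eventually_zero[OF that] in \<open>auto simp: h_def elim: eventually_mono\<close>)
  then have "weak_converges (\<lambda>n. T (h n)) (T (\<lambda>x. 0))"
    unfolding h_def by (intro T_weak_tendsto Cfun_cmult g Cfun_zero)
  then have "(\<lambda>n. \<phi> (T (h n))) \<longlonglongrightarrow> 0"
    using \<phi> T_zero bounded_linear.linear[OF \<phi>] linear_0 unfolding weak_converges_def by metis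
  moreover have "\<phi> (T (h n)) = (if \<phi> (T (g n)) = 0 then 0 else 1)" for n
    unfolding h_def T_cmult[OF g] linear_cmul[OF bounded_linear.linear[OF \<phi>]] by simp
  ultimately have "(\<lambda>n. if \<phi> (T (g n)) = 0 then 0 else 1 :: real) \<longlonglongrightarrow> 0"
    by simp
  from order_tendstoD(2)[OF this, of "1 / 2"]
  show "eventually (\<lambda>n. \<phi> (T (g n)) = 0) sequentially"
    by (rule eventually_mono) (auto split: if_splits)
qed

definition Cfun_vanishing_off :: "'a set \<Rightarrow> ('a \<Rightarrow> real) set" where
  "Cfun_vanishing_off W = {g \<in> Cfun X. \<forall>x. g x \<noteq> 0 \<longrightarrow> x \<in> W}"

definition T_null :: "'a set \<Rightarrow> bool" where
  "T_null W \<longleftrightarrow> (\<forall>g \<in> Cfun_vanishing_off W. T g = 0)"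

definition T_finite_rank :: "'a set \<Rightarrow> bool" where
  "T_finite_rank W \<longleftrightarrow> (\<exists>B. finite B \<and> T ` Cfun_vanishing_off W \<subseteq> span B)"

lemma Cfun_vanishing_offI:
  "g \<in> Cfun X \<Longrightarrow> (\<And>x. g x \<noteq> 0 \<Longrightarrow> x \<in> W) \<Longrightarrow> g \<in> Cfun_vanishing_off W"
  unfolding Cfun_vanishing_off_def by blast

lemma Cfun_vanishing_offD:
  "g \<in> Cfun_vanishing_off W \<Longrightarrow> g \<in> Cfun X"
  "g \<in> Cfun_vanishing_off W \<Longrightarrow> g x \<noteq> 0 \<Longrightarrow> x \<in> W"
  unfolding Cfun_vanishing_off_def by blast+

lemma Cfun_vanishing_off_zero: "(\<lambda>x. 0) \<in> Cfun_vanishing_off W"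
  by (simp add: Cfun_vanishing_off_def Cfun_zero)

lemma T_nullD: "T_null W \<Longrightarrow> g \<in> Cfun_vanishing_off W \<Longrightarrow> T g = 0"
  unfolding T_null_def by blast

lemma T_null_mono: "T_null W \<Longrightarrow> V \<subseteq> W \<Longrightarrow> T_null V"
  unfolding T_null_def Cfun_vanishing_off_def by blast

lemma eventually_T_null:
  assumes "\<And>x. x \<in> topspace X \<Longrightarrow> eventually (\<lambda>n. x \<notin> W n) sequentially"
  shows "eventually (\<lambda>n. T_null (W n)) sequentially"
proof -
  have "\<exists>g. g \<in> Cfun_vanishing_off (W n) \<and> (\<not> T_null (W n) \<longrightarrow> T g \<noteq> 0)" for n
    using Cfun_vanishing_off_zero unfolding T_null_def by metis
  then obtain g where g: "\<And>n. g n \<in> Cfun_vanishing_off (W n)"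
    and witness: "\<And>n. \<not> T_null (W n) \<Longrightarrow> T (g n) \<noteq> 0"
    by metis
  have "eventually (\<lambda>n. g n x = 0) sequentially" if "x \<in> topspace X" for x
    using assms[OF that] by eventually_elim (use g Cfun_vanishing_offD(2) in blast)
  then have "eventually (\<lambda>n. T (g n) = 0) sequentially"
    using g Cfun_vanishing_offD(1) by (intro T_eventually_zero) blast+
  then show ?thesis
    by eventually_elim (use witness in blast)
qed

lemma eventually_T_null_disjoint_family:
  assumes "disjoint_family W"
  shows "eventually (\<lambda>n. T_null (W n)) sequentially"
proof (rule eventually_T_null)
  fix x
  show "eventually (\<lambda>n. x \<notin> W n) sequentially"
  proof (cases "\<exists>m. x \<in> W m")
    case True
    then obtain m where "x \<in> W m"
      by blast
    then have "x \<notin> W n" if "n \<ge> Suc m" for n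
      using disjoint_family_onD[OF assms, of m n] that by auto
    then show ?thesis
      unfolding eventually_sequentially by blast
  qed simp
qed

lemma T_split_by_level:
  assumes a: "continuous_map X euclideanreal a" and "r < s" and k: "k \<in> Cfun_vanishing_off W"
  obtains k1 k2 where "k1 \<in> Cfun_vanishing_off {x. r < a x}"
    "k2 \<in> Cfun_vanishing_off (W \<inter> {x. a x < s})" "T k = T k1 + T k2"
proof -
  obtain p where p: "continuous_map X euclideanreal p"
    and above: "\<And>x. p x \<noteq> 0 \<Longrightarrow> r < a x" and below: "\<And>x. p x \<noteq> 1 \<Longrightarrow> a x < s"
    using continuous_map_ramp[OF a \<open>r < s\<close>] by blast
  have kC: "k \<in> Cfun X"
    using k by (rule Cfun_vanishing_offD)
  define k1 where "k1 x = k x * p x" for x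
  have k1C: "k1 \<in> Cfun X"
    unfolding k1_def using kC p by (rule Cfun_mult_continuous)
  show thesis
  proof
    show "k1 \<in> Cfun_vanishing_off {x. r < a x}"
      using k1C above by (intro Cfun_vanishing_offI) (auto simp: k1_def)
    show "(\<lambda>x. k x - k1 x) \<in> Cfun_vanishing_off (W \<inter> {x. a x < s})"
      using Cfun_diff[OF kC k1C] below Cfun_vanishing_offD(2)[OF k]
      by (intro Cfun_vanishing_offI) (auto simp: k1_def)
    show "T k = T k1 + T (\<lambda>x. k x - k1 x)"
      using T_diff[OF kC k1C] by simp
  qed
qed

lemma T_null_by_level:
  assumes a: "continuous_map X euclideanreal a" "r < s"
    and "T_null {x. r < a x}" "T_null (W \<inter> {x. a x < s})"
  shows "T_null W"
  unfolding T_null_def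
proof
  fix k
  assume k: "k \<in> Cfun_vanishing_off W"
  obtain k1 k2 where "k1 \<in> Cfun_vanishing_off {x. r < a x}"
    "k2 \<in> Cfun_vanishing_off (W \<inter> {x. a x < s})" "T k = T k1 + T k2"
    using T_split_by_level[OF a k] .
  then show "T k = 0"
    using assms(3,4) T_nullD by simp
qed

lemma T_finite_rank_by_level:
  assumes a: "continuous_map X euclideanreal a" "r < s"
    and "T_finite_rank {x. r < a x}" "T_finite_rank (W \<inter> {x. a x < s})"
  shows "T_finite_rank W"
proof -
  obtain B1 B2 where "finite B1" and B1: "T ` Cfun_vanishing_off {x. r < a x} \<subseteq> span B1"
    and "finite B2" and B2: "T ` Cfun_vanishing_off (W \<inter> {x. a x < s}) \<subseteq> span B2"
    using assms(3,4) unfolding T_finite_rank_def by blast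
  have "T k \<in> span (B1 \<union> B2)" if k: "k \<in> Cfun_vanishing_off W" for k
  proof -
    obtain k1 k2 where "k1 \<in> Cfun_vanishing_off {x. r < a x}"
      "k2 \<in> Cfun_vanishing_off (W \<inter> {x. a x < s})" and Tk: "T k = T k1 + T k2"
      using T_split_by_level[OF a k] .
    then have "T k1 \<in> span (B1 \<union> B2)" "T k2 \<in> span (B1 \<union> B2)"
      using B1 B2 span_mono[of B1 "B1 \<union> B2"] span_mono[of B2 "B1 \<union> B2"] by blast+
    then show ?thesis
      unfolding Tk by (rule span_add)
  qed
  with \<open>finite B1\<close> \<open>finite B2\<close> show ?thesis
    unfolding T_finite_rank_def by (intro exI[of _ "B1 \<union> B2"]) blast
qed

lemma exists_level_not_T_null:
  assumes a: "continuous_map X euclideanreal a" and "\<not> T_null {x. 0 < a x}"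
  shows "\<exists>s>0. \<not> T_null {x. s < a x}"
proof (rule ccontr)
  assume "\<not> (\<exists>s>0. \<not> T_null {x. s < a x})"
  then have levels: "\<And>s. s > 0 \<Longrightarrow> T_null {x. s < a x}"
    by blast
  define \<epsilon> where "\<epsilon> n = inverse (real (Suc n))" for n
  have "\<epsilon> \<longlonglongrightarrow> 0"
    unfolding \<epsilon>_def by (rule LIMSEQ_inverse_real_of_nat)
  have "eventually (\<lambda>n. T_null ({x. 0 < a x} \<inter> {x. a x < \<epsilon> n})) sequentially"
  proof (rule eventually_T_null)
    fix x
    show "eventually (\<lambda>n. x \<notin> {x. 0 < a x} \<inter> {x. a x < \<epsilon> n}) sequentially"
    proof (cases "0 < a x")
      case True
      show ?thesis
        using order_tendstoD(2)[OF \<open>\<epsilon> \<longlonglongrightarrow> 0\<close> True] by (rule eventually_mono) simp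
    qed simp
  qed
  then obtain n where null_n: "T_null ({x. 0 < a x} \<inter> {x. a x < \<epsilon> n})"
    using eventually_happens'[OF sequentially_bot] by blast
  have "\<epsilon> n / 2 > 0" "\<epsilon> n / 2 < \<epsilon> n"
    by (simp_all add: \<epsilon>_def)
  then have "T_null {x. 0 < a x}"
    using T_null_by_level[OF a _ levels null_n] by blast
  with assms(2) show False
    by simp
qed

lemma eventually_T_null_beyond_multiple:
  assumes u0: "\<And>x. 0 \<le> u x" and k: "k \<in> Cfun_vanishing_off {x. 0 < u x}"
  shows "eventually (\<lambda>n. T_null {x. real n * u x < \<bar>k x\<bar>}) sequentially"
proof (rule eventually_T_null)
  fix x
  show "eventually (\<lambda>n. x \<notin> {x. real n * u x < \<bar>k x\<bar>}) sequentially"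
  proof (cases "0 < u x")
    case True
    have "eventually (\<lambda>n. \<bar>k x\<bar> / u x < real n) sequentially"
      by (rule filterlim_real_sequentially[THEN filterlim_at_top_dense[THEN iffD1], rule_format])
    then show ?thesis
      by eventually_elim (use True in \<open>simp add: divide_less_eq\<close>)
  next
    case False
    then have "u x = 0" "k x = 0"
      using u0[of x] Cfun_vanishing_offD(2)[OF k, of x] by auto
    then show ?thesis
      by simp
  qed
qed

text \<open>The pointwise clamp \<open>r n\<close> of \<open>g\<close> into \<open>[- \<epsilon> n * u, \<epsilon> n * u]\<close> differs from \<open>g\<close>
  by two functions on which \<open>T\<close> vanishes, and tends to \<open>0\<close> pointwise.\<close>
lemma T_zero_if_levels_null:
  assumes g: "g \<in> Cfun X" and u: "u \<in> Cfun X" "\<And>x. 0 \<le> u x"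
    and above: "\<And>e. e > 0 \<Longrightarrow> T_null {x. e * u x < g x}"
    and below: "\<And>e. e > 0 \<Longrightarrow> T_null {x. g x < - (e * u x)}"
  shows "T g = 0"
proof -
  define \<epsilon> where "\<epsilon> n = inverse (real (Suc n))" for n
  have \<epsilon>: "\<epsilon> n > 0" for n
    by (simp add: \<epsilon>_def)
  define A where "A n x = max (g x - \<epsilon> n * u x) 0" for n x
  define B where "B n x = max (- g x - \<epsilon> n * u x) 0" for n x
  define r where "r n x = g x - A n x + B n x" for n x
  have AC: "A n \<in> Cfun X" and BC: "B n \<in> Cfun X" for n
    unfolding A_def B_def using Cfun_cmult[OF g, of "-1"]
    by (auto intro!: Cfun_pos_part Cfun_diff Cfun_cmult g u)
  have rC: "r n \<in> Cfun X" for n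
    unfolding r_def by (intro Cfun_add Cfun_diff g AC BC)
  have "T (A n) = 0" for n
    using above[OF \<epsilon>[of n]] AC[of n]
    by (intro T_nullD Cfun_vanishing_offI) (auto simp: A_def max_def split: if_splits)
  moreover have "T (B n) = 0" for n
    using below[OF \<epsilon>[of n]] BC[of n]
    by (intro T_nullD Cfun_vanishing_offI) (auto simp: B_def max_def split: if_splits)
  ultimately have Tr: "T (r n) = T g" for n
    unfolding r_def using T_add[OF Cfun_diff[OF g AC] BC] T_diff[OF g AC] by simp
  have "(\<lambda>n. r n x) \<longlonglongrightarrow> 0" for x
  proof (rule Lim_null_comparison)
    show "eventually (\<lambda>n. norm (r n x) \<le> \<epsilon> n * u x) sequentially"
      unfolding real_norm_def r_def A_def B_def
      using \<epsilon> u(2)[of x] by (intro always_eventually allI abs_clamp_le) (simp add: less_imp_le)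
    show "(\<lambda>n. \<epsilon> n * u x) \<longlonglongrightarrow> 0"
      unfolding \<epsilon>_def by (intro tendsto_mult_left_zero LIMSEQ_inverse_real_of_nat)
  qed
  then have "weak_converges (\<lambda>n. T g) (T (\<lambda>x. 0))"
    using T_weak_tendsto[of r, OF rC Cfun_zero] by (simp add: Tr)
  then show ?thesis
    using weak_converges_const_imp_eq T_zero by metis
qed

lemma T_null_above_mono:
  fixes u k :: "'a \<Rightarrow> real"
  assumes "\<And>x. 0 \<le> u x" "T_null {x. s * u x < k x}" "s \<le> t"
  shows "T_null {x. t * u x < k x}"
proof (rule T_null_mono[OF assms(2)], intro Collect_mono impI)
  fix x
  show "t * u x < k x \<Longrightarrow> s * u x < k x"
    using mult_right_mono[OF assms(3) assms(1)[of x]] by linarith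
qed

lemma T_null_below_mono:
  fixes u k :: "'a \<Rightarrow> real"
  assumes "\<And>x. 0 \<le> u x" "T_null {x. k x < t * u x}" "s \<le> t"
  shows "T_null {x. k x < s * u x}"
proof (rule T_null_mono[OF assms(2)], intro Collect_mono impI)
  fix x
  show "k x < s * u x \<Longrightarrow> k x < t * u x"
    using mult_right_mono[OF assms(3) assms(1)[of x]] by linarith
qed

text \<open>The levels \<open>t\<close> with \<open>T_null {t * u < k}\<close> and those with \<open>T_null {k < t * u}\<close>
  cover the real line, so they meet at a cut \<open>c\<close>; then \<open>T\<close> kills \<open>k - c * u\<close>.\<close>
lemma T_in_span_if_dichotomy:
  assumes u: "u \<in> Cfun X" "\<And>x. 0 \<le> u x"
    and dichotomy: "\<And>t. T_null {x. t * u x < k x} \<or> T_null {x. k x < t * u x}"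
    and k: "k \<in> Cfun_vanishing_off {x. 0 < u x}"
  shows "T k \<in> span {T u}"
proof -
  have kC: "k \<in> Cfun X"
    using k by (rule Cfun_vanishing_offD)
  obtain n where "T_null {x. real n * u x < \<bar>k x\<bar>}"
    using eventually_happens'[OF sequentially_bot eventually_T_null_beyond_multiple[OF u(2) k]]
    by blast
  then have start: "T_null {x. real n * u x < k x}" "T_null {x. k x < (- real n) * u x}"
    by (auto elim!: T_null_mono)
  have "\<exists>c. (\<forall>e>0. T_null {x. (c + e) * u x < k x}) \<and> (\<forall>e>0. T_null {x. k x < (c - e) * u x})"
    by (rule real_cut_up_down_closed[of "\<lambda>t. T_null {x. t * u x < k x}"
          "\<lambda>t. T_null {x. k x < t * u x}" "real n" "- real n"])
      (use T_null_above_mono T_null_below_mono u(2) dichotomy start in blast)+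
  then obtain c where above: "\<And>e. e > 0 \<Longrightarrow> T_null {x. (c + e) * u x < k x}"
    and below: "\<And>e. e > 0 \<Longrightarrow> T_null {x. k x < (c - e) * u x}"
    by blast
  have "T (\<lambda>x. k x - c * u x) = 0"
  proof (rule T_zero_if_levels_null[OF Cfun_diff[OF kC Cfun_cmult[OF u(1)]] u])
    fix e :: real
    assume "e > 0"
    show "T_null {x. e * u x < k x - c * u x}"
      using above[OF \<open>e > 0\<close>] by (simp add: algebra_simps)
    show "T_null {x. k x - c * u x < - (e * u x)}"
      using below[OF \<open>e > 0\<close>] by (simp add: algebra_simps)
  qed
  then have "T k = c *\<^sub>R T u"
    using T_diff[OF kC Cfun_cmult[OF u(1)]] T_cmult[OF u(1)] by simp
  then show ?thesis
    by (simp add: span_base span_scale)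
qed

lemma exists_two_sided_not_T_null:
  assumes u: "u \<in> Cfun X" "\<And>x. 0 \<le> u x" and "\<not> T_finite_rank {x. 0 < u x}"
  obtains k t where "k \<in> Cfun_vanishing_off {x. 0 < u x}"
    "\<not> T_null {x. t * u x < k x}" "\<not> T_null {x. k x < t * u x}"
proof -
  have "T ` Cfun_vanishing_off {x. 0 < u x} \<subseteq> span {T u}"
    if "\<forall>k \<in> Cfun_vanishing_off {x. 0 < u x}.
      \<forall>t. T_null {x. t * u x < k x} \<or> T_null {x. k x < t * u x}"
    using that T_in_span_if_dichotomy[OF u] by blast
  with assms(3) have "\<not> (\<forall>k \<in> Cfun_vanishing_off {x. 0 < u x}.
      \<forall>t. T_null {x. t * u x < k x} \<or> T_null {x. k x < t * u x})"
    unfolding T_finite_rank_def by blast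
  with that show thesis
    by blast
qed

text \<open>Split \<open>W\<close> along \<open>k - t * u\<close>, where \<open>T\<close> lives on both sides: for a suitable level \<open>s\<close> of the
  positive part \<open>a\<close>, the infinite rank passes to \<open>{a > s / 2}\<close> or to \<open>{a < s}\<close>, and the
  other side keeps a non-null piece.\<close>
lemma cozero_set_split:
  assumes W: "cozero_set X W" and infinite_rank: "\<not> T_finite_rank W"
  obtains V where "cozero_set X V" "\<not> T_finite_rank V" "V \<subseteq> W" "\<not> T_null (W - V)"
proof -
  obtain u where u: "u \<in> Cfun X" "\<And>x. 0 \<le> u x" and W_eq: "W = {x. 0 < u x}"
    using W unfolding cozero_set_def by blast
  obtain k t where k: "k \<in> Cfun_vanishing_off W"
    and above: "\<not> T_null {x. t * u x < k x}" and below: "\<not> T_null {x. k x < t * u x}"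
    using exists_two_sided_not_T_null[OF u] infinite_rank unfolding W_eq by blast
  have in_W: "x \<in> W" if "k x \<noteq> t * u x" for x
    using that Cfun_vanishing_offD(2)[OF k, of x] u(2)[of x] unfolding W_eq by force
  define a where "a x = max (k x - t * u x) 0" for x
  define b where "b x = max (t * u x - k x) 0" for x
  have aC: "a \<in> Cfun X" and bC: "b \<in> Cfun X"
    unfolding a_def b_def
    by (intro Cfun_pos_part Cfun_diff Cfun_cmult u(1) Cfun_vanishing_offD(1)[OF k])+
  have "{x. 0 < a x} = {x. t * u x < k x}" "{x. 0 < b x} = {x. k x < t * u x}"
    by (auto simp: a_def b_def)
  then have "\<exists>s>0. \<not> T_null {x. s < a x}" "\<exists>s>0. \<not> T_null {x. s < b x}"
    using exists_level_not_T_null[OF Cfun_continuous_map[OF aC]]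
      exists_level_not_T_null[OF Cfun_continuous_map[OF bC]] above below by simp_all
  then obtain s s' where "s > 0" and a_level: "\<not> T_null {x. s < a x}"
    and "s' > 0" and b_level: "\<not> T_null {x. s' < b x}"
    by blast
  have "\<not> T_finite_rank {x. s / 2 < a x} \<or> \<not> T_finite_rank (W \<inter> {x. a x < s})"
    using T_finite_rank_by_level[OF Cfun_continuous_map[OF aC], of "s / 2" s W]
      \<open>s > 0\<close> infinite_rank by auto
  then show thesis
  proof
    assume "\<not> T_finite_rank {x. s / 2 < a x}"
    moreover have "{x. s' < b x} \<subseteq> W - {x. s / 2 < a x}" "{x. s / 2 < a x} \<subseteq> W"
      using in_W \<open>s > 0\<close> \<open>s' > 0\<close> by (auto simp: a_def b_def)
    ultimately show thesis
      using that cozero_set_level[OF aC] \<open>s > 0\<close> b_level T_null_mono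
      by (metis half_gt_zero less_imp_le)
  next
    assume "\<not> T_finite_rank (W \<inter> {x. a x < s})"
    moreover have "{x. s < a x} \<subseteq> W - W \<inter> {x. a x < s}"
      using in_W \<open>s > 0\<close> by (auto simp: a_def)
    ultimately show thesis
      using that cozero_set_Int_below[OF W Cfun_continuous_map[OF aC]] a_level T_null_mono
      by blast
  qed
qed

lemma exists_disjoint_family_not_T_null:
  assumes "cozero_set X W" "\<not> T_finite_rank W"
  shows "\<exists>A :: nat \<Rightarrow> 'a set. disjoint_family A \<and> (\<forall>n. \<not> T_null (A n))"
proof -
  have "\<exists>Ws. \<forall>n. (cozero_set X (Ws n) \<and> \<not> T_finite_rank (Ws n)) \<and>
      (Ws (Suc n) \<subseteq> Ws n \<and> \<not> T_null (Ws n - Ws (Suc n)))"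
  proof (rule dependent_nat_choice)
    show "\<exists>W. cozero_set X W \<and> \<not> T_finite_rank W"
      using assms by blast
  next
    fix W n
    assume "cozero_set X W \<and> \<not> T_finite_rank W"
    then obtain V where "cozero_set X V" "\<not> T_finite_rank V" "V \<subseteq> W" "\<not> T_null (W - V)"
      using cozero_set_split by blast
    then show "\<exists>V. (cozero_set X V \<and> \<not> T_finite_rank V) \<and> (V \<subseteq> W \<and> \<not> T_null (W - V))"
      by blast
  qed
  then obtain Ws where shrink: "\<And>n. Ws (Suc n) \<subseteq> Ws n"
    and not_null: "\<And>n. \<not> T_null (Ws n - Ws (Suc n))"
    by blast
  have "disjoint_family (\<lambda>n. - Ws (Suc n) - - Ws n)"
    using shrink by (intro disjoint_family_Suc) blast
  then have "disjoint_family (\<lambda>n. Ws n - Ws (Suc n))"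
    by (simp add: Diff_eq Int_commute)
  with not_null show ?thesis
    by blast
qed

theorem T_finite_rank_Cfun: "\<exists>B. finite B \<and> T ` Cfun X \<subseteq> span B"
proof (rule ccontr)
  assume "\<nexists>B. finite B \<and> T ` Cfun X \<subseteq> span B"
  moreover have "Cfun_vanishing_off (topspace X) = Cfun X"
    using Cfun_outside unfolding Cfun_vanishing_off_def by fastforce
  ultimately have "\<not> T_finite_rank (topspace X)"
    unfolding T_finite_rank_def by simp
  then obtain A :: "nat \<Rightarrow> 'a set" where "disjoint_family A" "\<And>n. \<not> T_null (A n)"
    using exists_disjoint_family_not_T_null[OF cozero_set_topspace] by blast
  moreover obtain n where "T_null (A n)"
    using eventually_happens'[OF sequentially_bot eventually_T_null_disjoint_family]
      \<open>disjoint_family A\<close> by blast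
  ultimately show False
    by blast
qed

end

theorem theorem1p5:
  fixes X :: "'a topology" and T :: "('a \<Rightarrow> real) \<Rightarrow> 'b::banach"
  assumes "tychonoff_space X"
    and "linear_on_Cp X T"
    and "seq_continuous_Cp_weak X T"
  shows "\<exists>B. finite B \<and> T ` Cfun X \<subseteq> span B"
proof -
  interpret Cp_weak_operator X T
    using assms(2,3) by unfold_locales
  show ?thesis
    by (rule T_finite_rank_Cfun)
qed

end
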